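(* Let $S$ be simple random walk on $\mathbb{Z}$ started at $0$ and set $P^t(0,z)=P[S_{2t}=2z]$ for $t\ge1$, $z\ge0$. Then for every $m\ge0$ and every choice of distinct positive integers $t_0,\dots,t_m$, the $(m+1)\times(m+1)$ matrix $\big(P^{t_i}(0,j)\big)_{0\le i,j\le m}$ is non-singular. In particular, for any $r\ge m+1$, every $(m+1)\times(m+1)$ square submatrix of $\big(P^{t}(0,j)\big)_{1\le t\le r,\,0\le j\le m}$ is non-singular. *)

theory Defs
  imports "HOL-Probability.Probability" "Jordan_Normal_Form.Determinant" "Jordan_Normal_Form.DL_Submatrix"
begin

fun srw :: "nat \<Rightarrow> int pmf" where
  "srw 0 = return_pmf 0"
| "srw (Suc n) = bind_pmf (srw n) (\<lambda>x. map_pmf (\<lambda>s. x + s) (pmf_of_set {-1, 1}))"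

definition Pt :: "nat \<Rightarrow> nat \<Rightarrow> real" where
  "Pt t z = pmf (srw (2 * t)) (2 * int z)"

end

theory Submission
  imports Defs
begin

text \<open>Since \<open>P\<^sup>t(0,j) = binom(2t, t+j) / 4\<^sup>t\<close>, rescaling the row of \<open>t\<close> by
  \<open>4\<^sup>t (t+1)\<cdots>(t+m) / binom(2t, t)\<close> turns it into \<open>(f\<^sub>0(t), \<dots>, f\<^sub>m(t))\<close> with
  \<open>f\<^sub>j(x) = x(x-1)\<cdots>(x-j+1) \<cdot> (x+j+1)\<cdots>(x+m)\<close>, polynomials of degree at most \<open>m\<close>.
  A kernel vector \<open>c\<close> thus yields a polynomial \<open>\<Sum> c\<^sub>j f\<^sub>j\<close> of degree at most \<open>m\<close>
  with the \<open>m+1\<close> distinct roots \<open>t\<^sub>i\<close>, so it is zero. At \<open>x = -k\<close> the \<open>f\<^sub>j\<close> with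
  \<open>j < k\<close> vanish while \<open>f\<^sub>k\<close> does not, which forces \<open>c = 0\<close> by downward induction
  on \<open>k\<close>.\<close>

lemma pmf_srw_Suc:
  "pmf (srw (Suc n)) x = (pmf (srw n) (x - 1) + pmf (srw n) (x + 1)) / 2"
proof -
  have "srw (Suc n) = pmf_of_set {-1, 1} \<bind> (\<lambda>s. map_pmf (\<lambda>y. y + s) (srw n))"
    by (simp add: map_pmf_def bind_return_pmf bind_commute_pmf[of "srw n"] add.commute)
  moreover have "pmf (map_pmf (\<lambda>y. y + s) (srw n)) x = pmf (srw n) (x - s)" for s
    using pmf_map_inj'[of "\<lambda>y. y + s" "srw n" "x - s"] by (simp add: inj_def)
  ultimately show ?thesis
    by (simp add: pmf_bind_pmf_of_set add.commute)
qed

declare srw.simps(2) [simp del]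

lemma pmf_srw_below: "x < - int n \<Longrightarrow> pmf (srw n) x = 0"
  by (induction n arbitrary: x) (simp_all add: pmf_return pmf_srw_Suc)

lemma pmf_srw: "pmf (srw n) (2 * int k - int n) = real (n choose k) / 2 ^ n"
proof (induction n arbitrary: k)
  case 0
  then show ?case by (cases k) (simp_all add: pmf_return)
next
  case (Suc n)
  show ?case
  proof (cases k)
    case 0
    then show ?thesis
      using Suc.IH[of 0] by (simp add: pmf_srw_Suc pmf_srw_below algebra_simps)
  next
    case (Suc k')
    then show ?thesis
      using Suc.IH[of k] Suc.IH[of k']
      by (simp add: pmf_srw_Suc algebra_simps add_divide_distrib)
  qed
qed

lemma Pt_eq_binomial: "Pt t j = real ((2 * t) choose (t + j)) / 4 ^ t"
  using pmf_srw[of "2 * t" "t + j"] by (simp add: Pt_def power_mult)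

lemma binomial_Suc_ratio:
  "real (Suc k) * real (n choose Suc k) = (real n - real k) * real (n choose k)"
  using gbinomial_absorption[of k "real n"] gbinomial_absorb_comp[of "real n" k]
  by (simp add: binomial_gbinomial)

lemma binomial_add_prod:
  "real (n choose (k + j)) * (\<Prod>l = 1..j. real k + real l)
     = real (n choose k) * (\<Prod>l<j. real n - real k - real l)"
proof (induction j)
  case (Suc j)
  have "real (n choose (k + Suc j)) * (\<Prod>l = 1..Suc j. real k + real l)
      = (real (Suc (k + j)) * real (n choose Suc (k + j))) * (\<Prod>l = 1..j. real k + real l)"
    by (simp add: prod.nat_ivl_Suc' algebra_simps)
  also have "\<dots> = (real n - real k - real j) * (real (n choose (k + j)) * (\<Prod>l = 1..j. real k + real l))"
    by (simp only: binomial_Suc_ratio) (simp add: algebra_simps)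
  also have "\<dots> = real (n choose k) * (\<Prod>l<Suc j. real n - real k - real l)"
    unfolding Suc.IH by (simp add: mult_ac)
  finally show ?case .
qed simp

lemma triangular_combination_eq_0:
  fixes f :: "nat \<Rightarrow> 'a \<Rightarrow> 'b::idom"
  assumes below: "\<And>j k. j < k \<Longrightarrow> k \<le> m \<Longrightarrow> f j (x k) = 0"
    and diag: "\<And>k. k \<le> m \<Longrightarrow> f k (x k) \<noteq> 0"
    and comb: "\<And>k. k \<le> m \<Longrightarrow> (\<Sum>j\<le>m. c j * f j (x k)) = 0"
    and "k \<le> m"
  shows "c k = 0"
  using \<open>k \<le> m\<close>
proof (induction "m - k" arbitrary: k rule: less_induct)
  case less
  have "(\<Sum>j\<in>{..m} - {k}. c j * f j (x k)) = 0"
  proof (intro sum.neutral ballI)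
    fix j assume "j \<in> {..m} - {k}"
    then consider "j < k" | "k < j" "j \<le> m" by fastforce
    then show "c j * f j (x k) = 0"
      by cases (simp_all add: below less)
  qed
  then have "c k * f k (x k) = 0"
    using comb[OF less.prems] less.prems by (simp add: sum.remove)
  then show ?case
    using diag[OF less.prems] by simp
qed

definition Pt_poly :: "nat \<Rightarrow> nat \<Rightarrow> real poly" where
  "Pt_poly m j = (\<Prod>l<j. [:- real l, 1:]) * (\<Prod>l = Suc j..m. [:real l, 1:])"

lemma poly_Pt_poly:
  "poly (Pt_poly m j) x = (\<Prod>l<j. x - real l) * (\<Prod>l = Suc j..m. x + real l)"
  by (simp add: Pt_poly_def poly_prod add.commute)

lemma degree_Pt_poly: "j \<le> m \<Longrightarrow> degree (Pt_poly m j) \<le> m"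
proof -
  assume "j \<le> m"
  have "degree (Pt_poly m j) \<le> degree (\<Prod>l<j. [:- real l, 1:]) + degree (\<Prod>l = Suc j..m. [:real l, 1:])"
    unfolding Pt_poly_def by (rule degree_mult_le)
  also have "\<dots> \<le> j + (m - j)"
    by (intro add_mono order.trans[OF degree_prod_sum_le]) simp_all
  finally show ?thesis
    using \<open>j \<le> m\<close> by simp
qed

lemma Pt_eq_poly:
  assumes "j \<le> m"
  shows "Pt t j = real ((2 * t) choose t) / (4 ^ t * (\<Prod>l = 1..m. real t + real l))
                    * poly (Pt_poly m j) (real t)"
proof -
  have split: "(\<Prod>l = 1..m. real t + real l)
      = (\<Prod>l = 1..j. real t + real l) * (\<Prod>l = Suc j..m. real t + real l)"
    using assms by (subst prod.union_disjoint[symmetric]) (auto intro: prod.cong)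
  have "real ((2 * t) choose (t + j)) * (\<Prod>l = 1..m. real t + real l)
      = real ((2 * t) choose (t + j)) * (\<Prod>l = 1..j. real t + real l)
          * (\<Prod>l = Suc j..m. real t + real l)"
    by (simp only: split mult.assoc)
  also have "\<dots> = real ((2 * t) choose t) * (\<Prod>l<j. real (2 * t) - real t - real l)
          * (\<Prod>l = Suc j..m. real t + real l)"
    by (simp only: binomial_add_prod)
  also have "\<dots> = real ((2 * t) choose t) * poly (Pt_poly m j) (real t)"
    by (simp add: poly_Pt_poly)
  moreover have "(\<Prod>l = 1..m. real t + real l) > 0"
    by (intro prod_pos) auto
  ultimately show ?thesis
    by (simp add: Pt_eq_binomial field_simps)
qed

lemma poly_Pt_poly_neg_below: "j < k \<Longrightarrow> k \<le> m \<Longrightarrow> poly (Pt_poly m j) (- real k) = 0"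
  by (auto simp: poly_Pt_poly prod_zero_iff)

lemma poly_Pt_poly_neg_diag: "poly (Pt_poly m k) (- real k) \<noteq> 0"
  by (auto simp: poly_Pt_poly prod_zero_iff)

lemma Pt_poly_linear_independent:
  assumes "(\<Sum>j\<le>m. Polynomial.smult (c j) (Pt_poly m j)) = 0" and "j \<le> m"
  shows "c j = 0"
proof -
  have comb: "(\<Sum>j\<le>m. c j * poly (Pt_poly m j) (- real k)) = 0" for k
    using arg_cong[OF assms(1), of "\<lambda>p. poly p (- real k)"] by (simp add: poly_sum)
  from poly_Pt_poly_neg_below poly_Pt_poly_neg_diag comb assms(2) show ?thesis
    by (rule triangular_combination_eq_0[where x = "\<lambda>k. - real k"])
qed

lemma Pt_combination_eq_0:
  assumes "inj_on t {..m}"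
    and comb: "\<And>i. i \<le> m \<Longrightarrow> (\<Sum>j\<le>m. Pt (t i) j * c j) = 0"
    and "j \<le> m"
  shows "c j = 0"
proof -
  define g where "g = (\<Sum>j\<le>m. Polynomial.smult (c j) (Pt_poly m j))"
  have "poly g (real (t i)) = 0" if "i \<le> m" for i
  proof -
    let ?w = "real ((2 * t i) choose t i) / (4 ^ t i * (\<Prod>l = 1..m. real (t i) + real l))"
    have "?w * poly g (real (t i)) = (\<Sum>j\<le>m. Pt (t i) j * c j)"
      by (simp add: g_def poly_sum sum_distrib_left sum_divide_distrib Pt_eq_poly mult_ac)
    also have "\<dots> = 0"
      using comb[OF that] .
    finally show ?thesis
      by (simp add: prod_pos)
  qed
  moreover have "card ((\<lambda>i. real (t i)) ` {..m}) = Suc m"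
    using assms(1) by (simp add: card_image inj_on_def)
  moreover have "degree g \<le> m"
    unfolding g_def
    by (intro degree_sum_le) (auto intro: order.trans[OF degree_smult_le] degree_Pt_poly)
  ultimately have "g = 0"
    by (intro poly_eqI_degree[where A = "(\<lambda>i. real (t i)) ` {..m}"]) auto
  then show ?thesis
    using Pt_poly_linear_independent assms(3) unfolding g_def by blast
qed

lemma det_Pt_mat_ne_0:
  assumes "inj_on t {0..m}"
  shows "det (mat (Suc m) (Suc m) (\<lambda>(i, j). Pt (t i) j)) \<noteq> 0"
proof
  let ?M = "mat (Suc m) (Suc m) (\<lambda>(i, j). Pt (t i) j)"
  assume "det ?M = 0"
  then obtain v where v: "v \<in> carrier_vec (Suc m)" "v \<noteq> 0\<^sub>v (Suc m)" "?M *\<^sub>v v = 0\<^sub>v (Suc m)"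
    using det_0_iff_vec_prod_zero_field[of ?M "Suc m"] by auto
  have "(\<Sum>j\<le>m. Pt (t i) j * v $ j) = 0" if "i \<le> m" for i
    using arg_cong[OF v(3), of "\<lambda>w. w $ i"] v(1) that
    by (simp add: scalar_prod_def atLeast0LessThan lessThan_Suc_atMost)
  then have "v $ j = 0" if "j \<le> m" for j
    using Pt_combination_eq_0[of t m] assms that by (simp add: atLeast0AtMost)
  then have "v = 0\<^sub>v (Suc m)"
    using v(1) by (intro eq_vecI) auto
  with v(2) show False ..
qed

lemma pick_lessThan: "j < n \<Longrightarrow> pick {..<n} j = j"
  using pick_reduce_set[of j n UNIV] by (simp add: pick_UNIV lessThan_def)

lemma submatrix_mat_all_cols:
  assumes "I \<subseteq> {..<r}"
  shows "submatrix (mat r n f) I {..<n} = mat (card I) n (\<lambda>(i, j). f (pick I i, j))"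
proof -
  have rows: "{i. i < r \<and> i \<in> I} = I" and cols: "{j. j < n \<and> j \<in> {..<n}} = {..<n}"
    using assms by auto
  let ?N = "mat (card I) n (\<lambda>(i, j). f (pick I i, j))"
  show ?thesis
  proof (rule eq_matI)
    fix i j assume "i < dim_row ?N" and "j < dim_col ?N"
    moreover from this have "pick I i < r"
      using pick_le[of i r I] rows by simp
    ultimately show "submatrix (mat r n f) I {..<n} $$ (i, j) = ?N $$ (i, j)"
      by (simp add: submatrix_def rows cols pick_lessThan)
  qed (simp_all add: dim_submatrix rows cols)
qed

theorem lemma3p2:
  shows "(\<forall>(m::nat) (t::nat \<Rightarrow> nat).
            (\<forall>i\<le>m. 0 < t i) \<and> inj_on t {0..m} \<longrightarrow>
            det (mat (Suc m) (Suc m) (\<lambda>(i, j). Pt (t i) j)) \<noteq> 0)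
       \<and> (\<forall>(m::nat) (r::nat) I J. m + 1 \<le> r \<longrightarrow>
            I \<subseteq> {..<r} \<longrightarrow> J \<subseteq> {..<Suc m} \<longrightarrow>
            card I = Suc m \<longrightarrow> card J = Suc m \<longrightarrow>
            det (submatrix (mat r (Suc m) (\<lambda>(i, j). Pt (i + 1) j)) I J) \<noteq> 0)"
proof (intro conjI allI impI)
  fix m :: nat and t :: "nat \<Rightarrow> nat"
  assume "(\<forall>i\<le>m. 0 < t i) \<and> inj_on t {0..m}"
  then show "det (mat (Suc m) (Suc m) (\<lambda>(i, j). Pt (t i) j)) \<noteq> 0"
    using det_Pt_mat_ne_0 by blast
next
  fix m r :: nat and I J :: "nat set"
  assume "I \<subseteq> {..<r}" "J \<subseteq> {..<Suc m}" "card I = Suc m" "card J = Suc m"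
  moreover from this have "J = {..<Suc m}"
    by (metis card_lessThan card_subset_eq finite_lessThan)
  moreover have "inj_on (\<lambda>i. pick I i + 1) {0..m}"
    using \<open>card I = Suc m\<close>
    by (intro strict_mono_on_imp_inj_on strict_mono_onI) (simp add: pick_mono)
  ultimately show "det (submatrix (mat r (Suc m) (\<lambda>(i, j). Pt (i + 1) j)) I J) \<noteq> 0"
    using det_Pt_mat_ne_0 by (simp add: submatrix_mat_all_cols)
qed

end
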